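(* Let $R$ be a tolerance relation on $\{1,\ldots,n\}$ and $A=A(R)$. Let $\mathcal{D}(A)$ be the set of $\rho\in A$ with $\rho\succeq 0$ and $\mathrm{Tr}(\rho)=1$. Then the map $\mathcal{D}(A)\to\mathcal{S}(A)$, $\rho\mapsto\varphi_\rho$, where $\varphi_\rho(a)=\mathrm{Tr}(\rho^*a)$ for $a\in A$, is a bijection; moreover it is a homeomorphism when $\mathcal{D}(A)$ carries the norm topology and $\mathcal{S}(A)$ the weak-$*$ topology.
   Context: A tolerance relation on a set is a reflexive and symmetric relation. $T:M_n(\mathbb{C})\to M_n(\mathbb{C})$ is $T(b)=\sum_{(i,j)\in R}E_{ii}bE_{jj}$, and $A(R)=T(M_n(\mathbb{C}))$ (matrices vanishing at positions outside $R$). For $a\in A$, $a\succeq 0$ means $a=T(b)$ for some positive semidefinite $b\in M_n(\mathbb{C})$. $\mathcal{S}(A)$ is the set of states of the operator system $A$: linear functionals $\varphi:A\to\mathbb{C}$ with $\varphi(a)\ge0$ for every positive semidefinite $a\in A$ and $\varphi(1)=1$. *)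

theory Defs
  imports "HOL-Analysis.Analysis"
begin

text \<open>n x n complex matrices, indexed by a finite type 'n (standing for {1..n}).\<close>

definition tolerance :: "('n \<times> 'n) set \<Rightarrow> bool" where
  "tolerance R \<longleftrightarrow> refl R \<and> sym R"

definition mtrace :: "complex^'n^'n \<Rightarrow> complex" where
  "mtrace a = (\<Sum>i\<in>UNIV. a $ i $ i)"

definition adjoint_mat :: "complex^'n^'n \<Rightarrow> complex^'n^'n" where
  "adjoint_mat a = (\<chi> i j. cnj (a $ j $ i))"

definition psd :: "complex^'n^'n \<Rightarrow> bool" where
  "psd b \<longleftrightarrow> (\<forall>x::complex^'n.
     (\<Sum>i\<in>UNIV. \<Sum>j\<in>UNIV. cnj (x $ i) * b $ i $ j * x $ j) \<in> \<real> \<and>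
     Re (\<Sum>i\<in>UNIV. \<Sum>j\<in>UNIV. cnj (x $ i) * b $ i $ j * x $ j) \<ge> 0)"

text \<open>T(b) = sum over (i,j) in R of E_ii b E_jj.\<close>
definition Tmap :: "('n \<times> 'n) set \<Rightarrow> complex^'n^'n \<Rightarrow> complex^'n^'n" where
  "Tmap R b = (\<chi> i j. if (i, j) \<in> R then b $ i $ j else 0)"

definition opsys :: "('n \<times> 'n) set \<Rightarrow> (complex^'n^'n) set" where
  "opsys R = range (Tmap R)"

definition Rpos :: "('n \<times> 'n) set \<Rightarrow> complex^'n^'n \<Rightarrow> bool" where
  "Rpos R a \<longleftrightarrow> (\<exists>b. psd b \<and> a = Tmap R b)"

definition density_set :: "('n \<times> 'n) set \<Rightarrow> (complex^'n^'n) set" where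
  "density_set R = {\<rho> \<in> opsys R. Rpos R \<rho> \<and> mtrace \<rho> = 1}"

text \<open>A functional on A is represented as a total
  function which is 0 outside A (so that functionals on A correspond uniquely to such
  functions); the product (pointwise) topology on such functions is the weak-* topology.\<close>
definition states :: "('n \<times> 'n) set \<Rightarrow> (complex^'n^'n \<Rightarrow> complex) set" where
  "states R = {\<phi>.
     (\<forall>a\<in>opsys R. \<forall>b\<in>opsys R. \<phi> (a + b) = \<phi> a + \<phi> b) \<and>
     (\<forall>c::complex. \<forall>a\<in>opsys R. \<phi> ((\<chi> i j. c * a $ i $ j)) = c * \<phi> a) \<and>
     (\<forall>a\<in>opsys R. psd a \<longrightarrow> \<phi> a \<in> \<real> \<and> Re (\<phi> a) \<ge> 0) \<and>
     \<phi> (mat 1) = 1 \<and>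
     (\<forall>a. a \<notin> opsys R \<longrightarrow> \<phi> a = 0)}"

definition state_of :: "('n \<times> 'n) set \<Rightarrow> complex^'n^'n \<Rightarrow> (complex^'n^'n \<Rightarrow> complex)" where
  "state_of R \<rho> = (\<lambda>a. if a \<in> opsys R then mtrace (adjoint_mat \<rho> ** a) else 0)"

end

theory Submission
  imports Defs
begin

text \<open>Every \<open>a \<in> A(R)\<close> is a combination of the matrix units \<open>E\<^sub>i\<^sub>j\<close>, \<open>(i, j) \<in> R\<close>, so a
  functional \<open>\<phi>\<close> on \<open>A(R)\<close> equals \<open>\<phi>\<^sub>\<rho>\<close> for exactly one \<open>\<rho> \<in> A(R)\<close>, namely
  \<open>\<rho>\<^sub>i\<^sub>j = cnj (\<phi> E\<^sub>i\<^sub>j)\<close>; both \<open>\<rho> \<mapsto> \<phi>\<^sub>\<rho>\<close> and this inverse are continuous, being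
  finite-dimensional linear maps resp. built from finitely many evaluations.  It remains to
  match the positivity conditions.  If \<open>\<rho> = T(b)\<close> with \<open>b \<succeq> 0\<close>, then \<open>\<phi>\<^sub>\<rho>(a) = Tr(b\<^sup>* a)\<close>
  for \<open>a \<in> A(R)\<close>, and \<open>Tr(b a) \<ge> 0\<close> for positive semidefinite \<open>a, b\<close> by peeling off rank-one
  terms of \<open>b\<close> with Schur complements.  Conversely, the matrix \<open>\<rho>\<close> of a state is hermitian,
  has trace one and pairs nonnegatively with every positive semidefinite element of \<open>A(R)\<close>;
  a separating hyperplane argument against the compact convex set \<open>T(density matrices)\<close>
  then shows \<open>\<rho> \<in> T(psd)\<close>.\<close>

section \<open>Quadratic forms and positive semidefinite matrices\<close>

definition qform :: "complex^'n^'n \<Rightarrow> complex^'n \<Rightarrow> complex^'n \<Rightarrow> complex" where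
  "qform b x y = (\<Sum>i\<in>UNIV. \<Sum>j\<in>UNIV. cnj (x $ i) * b $ i $ j * y $ j)"

definition hermitian :: "complex^'n^'n \<Rightarrow> bool" where
  "hermitian m \<longleftrightarrow> (\<forall>i j. m $ j $ i = cnj (m $ i $ j))"

definition outer :: "complex^'n \<Rightarrow> complex^'n^'n" where
  "outer v = (\<chi> i j. v $ i * cnj (v $ j))"

lemma psd_iff_qform: "psd b \<longleftrightarrow> (\<forall>x. qform b x x \<in> \<real> \<and> 0 \<le> Re (qform b x x))"
  unfolding psd_def qform_def by simp

lemma matrix_scaleR_nth: "(r *\<^sub>R b) $ i $ j = of_real r * (b $ i $ j :: complex)"
proof -
  have "(r *\<^sub>R b) $ i $ j = r *\<^sub>R (b $ i $ j)" by simp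
  then show ?thesis by (simp add: scaleR_conv_of_real)
qed

lemma qform_add_left: "qform b (x + y) z = qform b x z + qform b y z"
  unfolding qform_def by (simp add: algebra_simps sum.distrib)

lemma qform_add_right: "qform b x (y + z) = qform b x y + qform b x z"
  unfolding qform_def by (simp add: algebra_simps sum.distrib)

lemma qform_add_matrix: "qform (b + c) x y = qform b x y + qform c x y"
  unfolding qform_def by (simp add: algebra_simps sum.distrib)

lemma qform_diff_matrix: "qform (b - c) x y = qform b x y - qform c x y"
  unfolding qform_def by (simp add: algebra_simps sum_subtractf)

lemma qform_scaleR_matrix: "qform (r *\<^sub>R b) x y = of_real r * qform b x y"
  unfolding qform_def matrix_scaleR_nth by (simp add: sum_distrib_left mult_ac)

lemma qform_axis_left: "qform b (axis k s) y = cnj s * (\<Sum>j\<in>UNIV. b $ k $ j * y $ j)"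
proof -
  have "(\<Sum>j\<in>UNIV. cnj (axis k s $ i) * b $ i $ j * y $ j) =
      (if i = k then cnj s * (\<Sum>j\<in>UNIV. b $ k $ j * y $ j) else 0)" for i
    by (simp add: axis_def sum_distrib_left mult.assoc)
  then show ?thesis unfolding qform_def by simp
qed

lemma qform_axis_right: "qform b x (axis k t) = (\<Sum>i\<in>UNIV. cnj (x $ i) * b $ i $ k) * t"
proof -
  have "cnj (x $ i) * b $ i $ j * axis k t $ j = (if j = k then cnj (x $ i) * b $ i $ k * t else 0)"
    for i j by (simp add: axis_def)
  then show ?thesis unfolding qform_def by (simp add: sum_distrib_right)
qed

lemma qform_axis_axis: "qform b (axis i s) (axis j t) = cnj s * b $ i $ j * t"
proof -
  have "b $ i $ n * axis j t $ n = (if n = j then b $ i $ j * t else 0)" for n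
    by (simp add: axis_def)
  then show ?thesis by (simp add: qform_axis_left mult.assoc)
qed

lemma qform_two_axes:
  "qform b (axis i s + axis j t) (axis i s + axis j t) =
     cnj s * b$i$i * s + cnj s * b$i$j * t + cnj t * b$j$i * s + cnj t * b$j$j * t"
  by (simp add: qform_add_left qform_add_right qform_axis_axis)

lemma hermitian_iff_adjoint: "hermitian m \<longleftrightarrow> adjoint_mat m = m"
proof -
  have "cnj (m $ j $ i) = m $ i $ j \<longleftrightarrow> m $ j $ i = cnj (m $ i $ j)" for i j
    by (metis complex_cnj_cnj)
  then show ?thesis unfolding hermitian_def adjoint_mat_def vec_eq_iff by simp
qed

lemma qform_real_if_hermitian:
  assumes "hermitian h"
  shows "qform h v v \<in> \<real>"
proof -
  have h: "cnj (h $ i $ j) = h $ j $ i" for i j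
    using assms unfolding hermitian_def by metis
  have "cnj (qform h v v) = (\<Sum>i\<in>UNIV. \<Sum>j\<in>UNIV. v $ i * h $ j $ i * cnj (v $ j))"
    unfolding qform_def by (simp add: cnj_sum h)
  also have "\<dots> = qform h v v"
    unfolding qform_def by (subst sum.swap) (simp add: mult_ac)
  finally show ?thesis by (simp add: Reals_cnj_iff)
qed

text \<open>Probing with \<open>e\<^sub>i + e\<^sub>j\<close> and \<open>e\<^sub>i + \<i> e\<^sub>j\<close> recovers both the real and
  the imaginary part of \<open>b\<^sub>i\<^sub>j - cnj b\<^sub>j\<^sub>i\<close>.\<close>
lemma hermitian_entry_if_qform_real:
  assumes "\<And>s t. qform b (axis i s + axis j t) (axis i s + axis j t) \<in> \<real>"
    and "\<And>s. qform b (axis i s) (axis i s) \<in> \<real>"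
    and "\<And>s. qform b (axis j s) (axis j s) \<in> \<real>"
  shows "b $ j $ i = cnj (b $ i $ j)"
proof -
  have ii: "Im (b$i$i) = 0" and jj: "Im (b$j$j) = 0"
    using assms(2)[of 1] assms(3)[of 1] by (simp_all add: qform_axis_axis complex_is_Real_iff)
  have re: "Im (b$i$i + b$i$j + b$j$i + b$j$j) = 0"
    using assms(1)[of 1 1] by (simp add: qform_two_axes complex_is_Real_iff)
  have "qform b (axis i 1 + axis j \<i>) (axis i 1 + axis j \<i>) = b$i$i + \<i> * b$i$j - \<i> * b$j$i + b$j$j"
    unfolding qform_two_axes by (simp add: algebra_simps)
  then have im: "Im (b$i$i + \<i> * b$i$j - \<i> * b$j$i + b$j$j) = 0"
    using assms(1)[of 1 \<i>] by (simp add: complex_is_Real_iff)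
  show ?thesis using ii jj re im by (simp add: complex_eq_iff)
qed

lemma psd_hermitian: "psd b \<Longrightarrow> hermitian b"
  unfolding hermitian_def psd_iff_qform by (blast intro: hermitian_entry_if_qform_real)

lemma psd_diag:
  assumes "psd b"
  shows "b $ k $ k \<in> \<real>" and "0 \<le> Re (b $ k $ k)"
  using assms[unfolded psd_iff_qform, rule_format, of "axis k 1"] by (auto simp: qform_axis_axis)

text \<open>Read off from the nonnegative real quadratic \<open>t \<mapsto> x\<^sup>* b x\<close> along
  \<open>x = t e\<^sub>i - cnj b\<^sub>i\<^sub>j e\<^sub>j\<close>.\<close>
lemma psd_entry_norm_sq_le:
  assumes "psd b"
  shows "(cmod (b $ i $ j))\<^sup>2 \<le> Re (b $ i $ i) * Re (b $ j $ j)"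
proof -
  define z where "z = b $ i $ j"
  define a c d where "a = Re (b $ i $ i)" and "c = (cmod z)\<^sup>2" and "d = Re (b $ j $ j)"
  have ji: "b $ j $ i = cnj z"
    using psd_hermitian[OF assms] unfolding hermitian_def z_def by blast
  have zz: "z * cnj z = of_real c"
    unfolding c_def by (simp add: complex_norm_square[symmetric])
  have quadratic: "0 \<le> a * t\<^sup>2 - 2 * t * c + c * d" for t :: real
  proof -
    define x where "x = axis i (of_real t) + axis j (- cnj z)"
    have "qform b x x = of_real (t\<^sup>2) * b $ i $ i - 2 * of_real t * (z * cnj z) + (z * cnj z) * b $ j $ j"
      unfolding x_def qform_two_axes ji z_def[symmetric] by (simp add: algebra_simps power2_eq_square)
    then have "Re (qform b x x) = a * t\<^sup>2 - 2 * t * c + c * d"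
      unfolding zz a_def d_def by simp
    then show ?thesis
      using assms[unfolded psd_iff_qform, rule_format, of x] by simp
  qed
  have "0 \<le> a" "0 \<le> c" "0 \<le> d"
    using psd_diag(2)[OF assms] unfolding a_def c_def d_def by simp_all
  then consider "a = 0" | "0 < a" by linarith
  then have "c \<le> a * d"
  proof cases
    case 1
    have "a * ((d + 1) / 2)\<^sup>2 - 2 * ((d + 1) / 2) * c + c * d = - c"
      using 1 by (simp add: algebra_simps)
    then show ?thesis using quadratic[of "(d + 1) / 2"] \<open>0 \<le> c\<close> 1 by simp
  next
    case 2
    have "a * (c / a)\<^sup>2 - 2 * (c / a) * c + c * d = c * (a * d - c) / a"
      using 2 by (simp add: field_simps power2_eq_square)
    then have "0 \<le> c * (a * d - c)"
      using quadratic[of "c / a"] 2 by (simp add: zero_le_divide_iff)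
    then show ?thesis
      using \<open>0 \<le> c\<close> \<open>0 \<le> a\<close> \<open>0 \<le> d\<close> by (cases "c = 0") (simp_all add: zero_le_mult_iff)
  qed
  then show ?thesis unfolding a_def c_def d_def z_def .
qed

lemma psd_row_zero:
  assumes "psd b" "b $ k $ k = 0"
  shows "b $ k $ j = 0"
  using psd_entry_norm_sq_le[OF assms(1), of k j] assms(2) by simp

lemma psd_add: "psd b \<Longrightarrow> psd c \<Longrightarrow> psd (b + c)"
  unfolding psd_iff_qform qform_add_matrix by auto

lemma psd_scaleR: "0 \<le> r \<Longrightarrow> psd b \<Longrightarrow> psd (r *\<^sub>R b)"
  unfolding psd_iff_qform qform_scaleR_matrix by auto

lemma psd_outer: "psd (outer v)"
  unfolding psd_iff_qform
proof
  fix x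
  define w where "w = (\<Sum>i\<in>UNIV. cnj (x $ i) * v $ i)"
  have "qform (outer v) x x = w * cnj w"
    unfolding w_def qform_def outer_def cnj_sum sum_product by (simp add: mult_ac)
  then show "qform (outer v) x x \<in> \<real> \<and> 0 \<le> Re (qform (outer v) x x)"
    unfolding complex_mult_cnj by (simp del: of_real_add of_real_power)
qed

lemma hermitian_outer: "hermitian (outer v)"
  unfolding hermitian_def outer_def by simp

section \<open>The trace of a product of positive semidefinite matrices\<close>

definition hs_inner :: "complex^'n^'n \<Rightarrow> complex^'n^'n \<Rightarrow> complex" where
  "hs_inner x y = (\<Sum>i\<in>UNIV. \<Sum>j\<in>UNIV. cnj (x $ i $ j) * y $ i $ j)"

lemma mtrace_adjoint_mult: "mtrace (adjoint_mat x ** y) = hs_inner x y"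
  unfolding mtrace_def adjoint_mat_def matrix_matrix_mult_def hs_inner_def
  by (subst sum.swap) simp

lemma inner_eq_Re_hs_inner: "inner x y = Re (hs_inner x y)"
  unfolding hs_inner_def inner_vec_def inner_complex_def by (simp add: Re_sum)

lemma hs_inner_add_left: "hs_inner (x + y) a = hs_inner x a + hs_inner y a"
  unfolding hs_inner_def by (simp add: algebra_simps sum.distrib)

lemma hs_inner_add_right: "hs_inner x (a + b) = hs_inner x a + hs_inner x b"
  unfolding hs_inner_def by (simp add: algebra_simps sum.distrib)

lemma hs_inner_scale_right: "hs_inner x (\<chi> i j. c * a $ i $ j) = c * hs_inner x a"
  unfolding hs_inner_def by (simp add: algebra_simps sum_distrib_left)

lemma hs_inner_mat1_left: "hs_inner (mat 1) x = mtrace (x :: complex^'n^'n)"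
proof -
  have "cnj ((mat 1 :: complex^'n^'n) $ i $ j) * x $ i $ j = (if j = i then x $ i $ i else 0)" for i j
    by (simp add: mat_def)
  then show ?thesis unfolding hs_inner_def mtrace_def by simp
qed

lemma hs_inner_mat1_right: "hs_inner x (mat 1) = cnj (mtrace (x :: complex^'n^'n))"
proof -
  have "cnj (x $ i $ j) * (mat 1 :: complex^'n^'n) $ i $ j = (if j = i then cnj (x $ i $ i) else 0)" for i j
    by (simp add: mat_def)
  then show ?thesis unfolding hs_inner_def mtrace_def by (simp add: cnj_sum)
qed

lemma inner_mat1: "inner (mat 1) x = Re (mtrace (x :: complex^'n^'n))"
  by (simp add: inner_eq_Re_hs_inner hs_inner_mat1_left)

lemma hs_inner_outer: "hs_inner x (outer v) = qform (adjoint_mat x) v v"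
  unfolding hs_inner_def qform_def outer_def adjoint_mat_def
  by (subst sum.swap) (simp add: mult_ac)

lemma hs_inner_rank_one: "hs_inner (\<chi> i j. u $ i * cnj (u $ j) / \<beta>) a = qform a u u / cnj \<beta>"
  unfolding hs_inner_def qform_def by (simp add: sum_divide_distrib mult_ac)

lemma qform_rank_one:
  "qform (\<chi> i j. u $ i * cnj (u $ j) / \<beta>) x x =
     (\<Sum>i\<in>UNIV. cnj (x $ i) * u $ i) * cnj (\<Sum>i\<in>UNIV. cnj (x $ i) * u $ i) / \<beta>"
proof -
  have "qform (\<chi> i j. u $ i * cnj (u $ j) / \<beta>) x x =
      (\<Sum>i\<in>UNIV. \<Sum>j\<in>UNIV. (cnj (x $ i) * u $ i) * (x $ j * cnj (u $ j)) / \<beta>)"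
    unfolding qform_def by (simp add: mult_ac)
  also have "\<dots> = (\<Sum>i\<in>UNIV. cnj (x $ i) * u $ i) * (\<Sum>j\<in>UNIV. x $ j * cnj (u $ j)) / \<beta>"
    by (simp add: sum_product sum_divide_distrib)
  finally show ?thesis by simp
qed

text \<open>For \<open>b\<^sub>k\<^sub>k = 0\<close> the division by zero makes the Schur complement equal to \<open>b\<close>
  itself; for positive semidefinite \<open>b\<close> the \<open>k\<close>-th row then vanishes anyway, so none of the
  lemmas below needs the hypothesis \<open>b\<^sub>k\<^sub>k \<noteq> 0\<close>.\<close>
definition schur_complement :: "complex^'n^'n \<Rightarrow> 'n \<Rightarrow> complex^'n^'n" where
  "schur_complement b k = b - (\<chi> i j. b $ i $ k * cnj (b $ j $ k) / b $ k $ k)"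

lemma psd_schur_complement:
  assumes "psd b"
  shows "psd (schur_complement b k)"
proof (cases "b $ k $ k = 0")
  case True
  then have "schur_complement b k = b" by (simp add: schur_complement_def vec_eq_iff)
  then show ?thesis using assms by simp
next
  case False
  define \<beta> u where "\<beta> = b $ k $ k" and "u = (\<chi> i. b $ i $ k)"
  have cb: "cnj \<beta> = \<beta>" using psd_diag(1)[OF assms] by (simp add: \<beta>_def Reals_cnj_iff)
  have h: "b $ j $ i = cnj (b $ i $ j)" for i j
    using psd_hermitian[OF assms] unfolding hermitian_def by blast
  have sc: "schur_complement b k = b - (\<chi> i j. u $ i * cnj (u $ j) / \<beta>)"
    by (simp add: schur_complement_def \<beta>_def u_def)
  show ?thesis unfolding psd_iff_qform
  proof
    fix x
    define q where "q = (\<Sum>j\<in>UNIV. b $ k $ j * x $ j)"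
    define p where "p = (\<Sum>i\<in>UNIV. cnj (x $ i) * u $ i)"
    define t where "t = - q / \<beta>"
    have pq: "p = cnj q" unfolding p_def q_def u_def by (simp add: h[of k] mult.commute)
    have "qform (schur_complement b k) x x = qform b x x - p * cnj p / \<beta>"
      unfolding sc qform_diff_matrix qform_rank_one p_def ..
    also have "\<dots> = qform b x x + p * t + cnj t * q + cnj t * \<beta> * t"
      unfolding pq t_def using cb False by (simp add: \<beta>_def field_simps)
    also have "\<dots> = qform b (x + axis k t) (x + axis k t)"
      unfolding qform_add_left qform_add_right qform_axis_axis
      unfolding qform_axis_left qform_axis_right p_def q_def \<beta>_def u_def by simp
    finally show "qform (schur_complement b k) x x \<in> \<real> \<and> 0 \<le> Re (qform (schur_complement b k) x x)"
      using assms[unfolded psd_iff_qform] by metis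
  qed
qed

lemma schur_complement_row_zero:
  assumes "psd b"
  shows "schur_complement b k $ k $ j = 0"
proof (cases "b $ k $ k = 0")
  case True
  then show ?thesis using psd_row_zero[OF assms] by (simp add: schur_complement_def)
next
  case False
  have "b $ j $ k = cnj (b $ k $ j)" using psd_hermitian[OF assms] unfolding hermitian_def by blast
  then show ?thesis using False by (simp add: schur_complement_def)
qed

lemma schur_complement_col_zero:
  assumes "psd b"
  shows "schur_complement b k $ i $ k = 0"
  using psd_hermitian[OF psd_schur_complement[OF assms]] schur_complement_row_zero[OF assms]
  unfolding hermitian_def by (metis complex_cnj_zero)

lemma hs_inner_schur_complement:
  assumes "psd b"
  shows "hs_inner b a = hs_inner (schur_complement b k) a + qform a (\<chi> i. b $ i $ k) (\<chi> i. b $ i $ k) / b $ k $ k"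
proof -
  define u where "u = (\<chi> i. b $ i $ k)"
  have cb: "cnj (b $ k $ k) = b $ k $ k" using psd_diag(1)[OF assms] by (simp add: Reals_cnj_iff)
  have "b = schur_complement b k + (\<chi> i j. u $ i * cnj (u $ j) / b $ k $ k)"
    by (simp add: schur_complement_def u_def)
  then have "hs_inner b a = hs_inner (schur_complement b k) a + hs_inner (\<chi> i j. u $ i * cnj (u $ j) / b $ k $ k) a"
    by (metis hs_inner_add_left)
  then show ?thesis unfolding hs_inner_rank_one cb u_def .
qed

text \<open>Induction on a set containing the support of \<open>b\<close>: each Schur complement step removes one
  index from the support and splits off a rank-one term \<open>u u\<^sup>* / b\<^sub>k\<^sub>k\<close>, whose pairing with \<open>a\<close>
  is \<open>u\<^sup>* a u / b\<^sub>k\<^sub>k \<ge> 0\<close>.\<close>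
lemma hs_inner_psd_nonneg_supported:
  assumes "finite S" "psd a" "psd b" "\<forall>i j. b $ i $ j \<noteq> 0 \<longrightarrow> i \<in> S \<and> j \<in> S"
  shows "hs_inner b a \<in> \<real> \<and> 0 \<le> Re (hs_inner b a)"
  using assms(1,3,4)
proof (induction S arbitrary: b rule: finite_induct)
  case empty
  then show ?case by (simp add: hs_inner_def)
next
  case (insert k S)
  define c where "c = schur_complement b k"
  have "\<forall>i j. c $ i $ j \<noteq> 0 \<longrightarrow> i \<in> S \<and> j \<in> S"
  proof (intro allI impI)
    fix i j assume cij: "c $ i $ j \<noteq> 0"
    then have "i \<noteq> k" "j \<noteq> k"
      using schur_complement_row_zero[OF insert.prems(1)] schur_complement_col_zero[OF insert.prems(1)]
      unfolding c_def by metis+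
    moreover have "b $ i $ j \<noteq> 0 \<or> (b $ i $ k \<noteq> 0 \<and> b $ j $ k \<noteq> 0)"
      using cij by (auto simp: c_def schur_complement_def)
    ultimately show "i \<in> S \<and> j \<in> S" using insert.prems(2) by blast
  qed
  then have c_nonneg: "hs_inner c a \<in> \<real> \<and> 0 \<le> Re (hs_inner c a)"
    using insert.IH psd_schur_complement[OF insert.prems(1)] unfolding c_def by blast
  define u where "u = (\<chi> i. b $ i $ k)"
  obtain \<beta> where \<beta>: "b $ k $ k = of_real \<beta>" "0 \<le> \<beta>"
    using psd_diag[OF insert.prems(1)] by (metis Reals_cases Re_complex_of_real)
  obtain r where r: "qform a u u = of_real r" "0 \<le> r"
    using assms(2) unfolding psd_iff_qform by (metis Reals_cases Re_complex_of_real)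
  have "qform a u u / b $ k $ k = of_real (r / \<beta>)" "0 \<le> r / \<beta>"
    using \<beta> r by simp_all
  then show ?case
    using c_nonneg hs_inner_schur_complement[OF insert.prems(1), of a k] unfolding c_def u_def by auto
qed

lemma hs_inner_psd_nonneg:
  assumes "psd a" "psd b"
  shows "hs_inner b a \<in> \<real> \<and> 0 \<le> Re (hs_inner b a)"
  using hs_inner_psd_nonneg_supported[of UNIV a b] assms by simp

section \<open>The operator system \<open>A(R)\<close>\<close>

lemma in_opsys_iff: "a \<in> opsys R \<longleftrightarrow> (\<forall>i j. (i, j) \<notin> R \<longrightarrow> a $ i $ j = 0)"
proof
  assume "\<forall>i j. (i, j) \<notin> R \<longrightarrow> a $ i $ j = 0"
  then have "a = Tmap R a" unfolding Tmap_def by (simp add: vec_eq_iff)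
  then show "a \<in> opsys R" unfolding opsys_def by blast
qed (auto simp: opsys_def Tmap_def)

lemma Tmap_eq_self: "a \<in> opsys R \<Longrightarrow> Tmap R a = a"
  unfolding in_opsys_iff Tmap_def by (simp add: vec_eq_iff)

lemma linear_Tmap: "linear (Tmap R)"
  by (rule linearI) (simp_all add: Tmap_def vec_eq_iff)

lemma inner_Tmap: "inner x (Tmap R m) = inner (Tmap R x) m"
  unfolding inner_vec_def Tmap_def by (auto intro!: sum.cong)

lemma tolerance_refl: "tolerance R \<Longrightarrow> (i, i) \<in> R"
  unfolding tolerance_def by (auto dest: refl_onD)

lemma tolerance_sym: "tolerance R \<Longrightarrow> (i, j) \<in> R \<Longrightarrow> (j, i) \<in> R"
  unfolding tolerance_def by (auto dest: symD)

lemma mtrace_Tmap: "tolerance R \<Longrightarrow> mtrace (Tmap R b) = mtrace b"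
  unfolding mtrace_def Tmap_def by (simp add: tolerance_refl)

definition mat_unit :: "'n \<Rightarrow> 'n \<Rightarrow> complex^'n^'n" where
  "mat_unit i j = (\<chi> k l. if k = i \<and> l = j then 1 else 0)"

lemma opsys_add: "a \<in> opsys R \<Longrightarrow> b \<in> opsys R \<Longrightarrow> a + b \<in> opsys R"
  unfolding in_opsys_iff by simp

lemma opsys_scale: "a \<in> opsys R \<Longrightarrow> (\<chi> i j. c * a $ i $ j) \<in> opsys R"
  unfolding in_opsys_iff by simp

lemma opsys_sum: "(\<And>p. p \<in> F \<Longrightarrow> f p \<in> opsys R) \<Longrightarrow> sum f F \<in> opsys R"
  unfolding in_opsys_iff by (induction F rule: infinite_finite_induct) auto

lemma mat_unit_in_opsys: "(i, j) \<in> R \<Longrightarrow> mat_unit i j \<in> opsys R"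
  unfolding in_opsys_iff mat_unit_def by auto

lemma mat1_in_opsys: "tolerance R \<Longrightarrow> mat 1 \<in> opsys R"
  unfolding in_opsys_iff by (auto simp: mat_def tolerance_refl)

lemma outer_in_opsys:
  assumes tol: "tolerance R" and "(i, j) \<in> R" and supp: "\<And>k. v $ k \<noteq> 0 \<Longrightarrow> k = i \<or> k = j"
  shows "outer v \<in> opsys R"
  unfolding in_opsys_iff
proof (intro allI impI)
  fix k l assume "(k, l) \<notin> R"
  then have "\<not> (v $ k \<noteq> 0 \<and> v $ l \<noteq> 0)"
    using supp assms(2) tolerance_refl[OF tol] tolerance_sym[OF tol] by metis
  then show "outer v $ k $ l = 0" unfolding outer_def by auto
qed

lemma hs_inner_Tmap_left: "a \<in> opsys R \<Longrightarrow> hs_inner (Tmap R b) a = hs_inner b a"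
  unfolding in_opsys_iff hs_inner_def Tmap_def by (auto intro!: sum.cong)

section \<open>Density matrices and the positive cone of \<open>A(R)\<close>\<close>

definition density_matrices :: "(complex^'n^'n) set" where
  "density_matrices = {b. psd b \<and> mtrace b = 1}"

lemma mtrace_add: "mtrace (a + b) = mtrace a + mtrace b"
  unfolding mtrace_def by (simp add: sum.distrib)

lemma mtrace_scaleR: "mtrace (r *\<^sub>R a) = of_real r * mtrace a"
  unfolding mtrace_def matrix_scaleR_nth by (simp add: sum_distrib_left)

lemma psd_mtrace_pos:
  assumes "psd p" "p \<noteq> 0"
  shows "mtrace p = of_real (Re (mtrace p))" and "0 < Re (mtrace p)"
proof -
  have "mtrace p \<in> \<real>"
    unfolding mtrace_def using psd_diag(1)[OF assms(1)] by (intro sum_in_Reals)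
  then show "mtrace p = of_real (Re (mtrace p))" by simp
  have nonneg: "0 \<le> Re (p $ i $ i)" for i using psd_diag(2)[OF assms(1)] .
  have "Re (mtrace p) \<noteq> 0"
  proof
    assume "Re (mtrace p) = 0"
    then have "\<forall>i\<in>UNIV. Re (p $ i $ i) = 0"
      using sum_nonneg_eq_0_iff[of UNIV "\<lambda>i. Re (p $ i $ i)"] nonneg by (simp add: mtrace_def Re_sum)
    then have "p $ i $ i = 0" for i using psd_diag(1)[OF assms(1), of i] by (simp add: complex_eq_iff complex_is_Real_iff)
    then have "p = 0" using psd_row_zero[OF assms(1)] by (simp add: vec_eq_iff)
    then show False using assms(2) by simp
  qed
  moreover have "0 \<le> Re (mtrace p)" using nonneg by (simp add: mtrace_def Re_sum sum_nonneg)
  ultimately show "0 < Re (mtrace p)" by simp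
qed

lemma psd_eq_scaleR_density_matrix:
  assumes "psd p" "p \<noteq> 0"
  obtains s d where "0 < s" "d \<in> density_matrices" "p = s *\<^sub>R d"
proof
  define s where "s = Re (mtrace p)"
  show "0 < s" unfolding s_def by (rule psd_mtrace_pos(2)[OF assms])
  then show "p = s *\<^sub>R ((1 / s) *\<^sub>R p)" by simp
  have "mtrace ((1 / s) *\<^sub>R p) = of_real (1 / s) * of_real s"
    unfolding mtrace_scaleR s_def using psd_mtrace_pos(1)[OF assms] by simp
  then show "(1 / s) *\<^sub>R p \<in> density_matrices"
    using \<open>0 < s\<close> psd_scaleR[OF _ assms(1), of "1 / s"]
    by (simp add: density_matrices_def flip: of_real_mult)
qed

lemma density_matrix_entry_bound:
  assumes "b \<in> density_matrices"
  shows "cmod (b $ i $ j) \<le> 1"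
proof -
  have b: "psd b" "mtrace b = 1" using assms unfolding density_matrices_def by auto
  have diag_le: "Re (b $ k $ k) \<le> 1" for k
  proof -
    have "Re (b $ k $ k) \<le> (\<Sum>i\<in>UNIV. Re (b $ i $ i))"
      by (rule member_le_sum) (use psd_diag(2)[OF b(1)] in auto)
    also have "\<dots> = 1" using b(2) unfolding mtrace_def by (metis Re_sum one_complex.sel(1))
    finally show ?thesis .
  qed
  have "(cmod (b $ i $ j))\<^sup>2 \<le> 1 * 1"
    using psd_entry_norm_sq_le[OF b(1), of i j] mult_mono[OF diag_le diag_le] psd_diag(2)[OF b(1)]
    by (meson order_trans zero_le_one)
  then show ?thesis by (simp add: power_le_one_iff abs_le_square_iff)
qed

lemma norm_matrix_le_sum: "norm (b::complex^'n^'n) \<le> (\<Sum>i\<in>UNIV. \<Sum>j\<in>UNIV. cmod (b $ i $ j))"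
proof -
  have "norm b \<le> (\<Sum>i\<in>UNIV. norm (b $ i))" unfolding norm_vec_def by (rule L2_set_le_sum) simp
  also have "\<dots> \<le> (\<Sum>i\<in>UNIV. \<Sum>j\<in>UNIV. cmod (b $ i $ j))"
    by (rule sum_mono) (unfold norm_vec_def, rule L2_set_le_sum, simp)
  finally show ?thesis .
qed

lemma bounded_density_matrices: "bounded (density_matrices :: (complex^'n^'n) set)"
  unfolding bounded_iff
proof (intro exI ballI)
  fix b :: "complex^'n^'n" assume "b \<in> density_matrices"
  then have "(\<Sum>i\<in>UNIV. \<Sum>j\<in>UNIV. cmod (b $ i $ j)) \<le> (\<Sum>i\<in>(UNIV::'n set). \<Sum>j\<in>(UNIV::'n set). 1)"
    by (intro sum_mono density_matrix_entry_bound)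
  then show "norm b \<le> real (CARD('n) * CARD('n))"
    using norm_matrix_le_sum[of b] by simp
qed

lemma closed_density_matrices: "closed (density_matrices :: (complex^'n^'n) set)"
proof -
  have qform_cont: "continuous_on UNIV (\<lambda>b::complex^'n^'n. qform b x x)" for x
    unfolding qform_def by (intro continuous_intros)
  have "density_matrices = {b::complex^'n^'n. \<forall>x. Im (qform b x x) = 0}
      \<inter> {b. \<forall>x. 0 \<le> Re (qform b x x)} \<inter> {b. mtrace b = 1}"
    unfolding density_matrices_def psd_iff_qform complex_is_Real_iff by blast
  also have "closed \<dots>"
    unfolding mtrace_def
    by (intro closed_Int closed_Collect_all closed_Collect_eq closed_Collect_le continuous_intros qform_cont)
  finally show ?thesis .
qed

lemma compact_density_matrices: "compact (density_matrices :: (complex^'n^'n) set)"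
  using bounded_density_matrices closed_density_matrices compact_eq_bounded_closed by blast

lemma convex_density_matrices: "convex (density_matrices :: (complex^'n^'n) set)"
  unfolding convex_def density_matrices_def
  by (auto simp: psd_add psd_scaleR mtrace_add mtrace_scaleR simp flip: of_real_add)

definition hermitian_part :: "complex^'n^'n \<Rightarrow> complex^'n^'n" where
  "hermitian_part m = (1/2) *\<^sub>R (m + adjoint_mat m)"

lemma hermitian_hermitian_part: "hermitian (hermitian_part m)"
  unfolding hermitian_def hermitian_part_def adjoint_mat_def by (simp add: add.commute)

lemma inner_adjoint: "inner x (adjoint_mat m) = inner (adjoint_mat x) m"
  unfolding inner_eq_Re_hs_inner hs_inner_def adjoint_mat_def
  by (subst sum.swap) (simp add: Re_sum)

lemma inner_hermitian_part: "hermitian x \<Longrightarrow> inner x (hermitian_part m) = inner x m"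
  unfolding hermitian_part_def hermitian_iff_adjoint by (simp add: inner_add_right inner_adjoint)

lemma psd_hermitian_part:
  assumes "\<And>v. 0 \<le> inner m (outer v)"
  shows "psd (hermitian_part m)"
  unfolding psd_iff_qform
proof
  fix v
  define h where "h = hermitian_part m"
  have "Re (qform h v v) = Re (qform (adjoint_mat h) v v)"
    using hermitian_hermitian_part hermitian_iff_adjoint unfolding h_def by metis
  also have "\<dots> = inner h (outer v)"
    by (simp add: inner_eq_Re_hs_inner hs_inner_outer)
  also have "\<dots> = inner (outer v) h"
    by (rule inner_commute)
  also have "\<dots> = inner m (outer v)"
    unfolding h_def inner_hermitian_part[OF hermitian_outer] by (rule inner_commute)
  finally show "qform h v v \<in> \<real> \<and> 0 \<le> Re (qform h v v)"
    using assms qform_real_if_hermitian[OF hermitian_hermitian_part] unfolding h_def by simp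
qed

lemma hermitian_part_Tmap_in_opsys: "tolerance R \<Longrightarrow> hermitian_part (Tmap R m) \<in> opsys R"
  unfolding in_opsys_iff hermitian_part_def adjoint_mat_def Tmap_def by (auto dest: tolerance_sym)

lemma inner_Tmap_psd_nonneg_if_separating:
  assumes tol: "tolerance R" and sep: "\<forall>x\<in>Tmap R ` density_matrices. \<beta> < inner w x" and "psd p"
  shows "0 \<le> inner (w - \<beta> *\<^sub>R mat 1) (Tmap R p)"
proof (cases "p = 0")
  case True
  then have "Tmap R p = 0" by (simp add: Tmap_def vec_eq_iff)
  then show ?thesis by simp
next
  case False
  then obtain s d where sd: "0 < s" "d \<in> density_matrices" "p = s *\<^sub>R d"
    using psd_eq_scaleR_density_matrix[OF \<open>psd p\<close>] by blast
  then have "mtrace (Tmap R d) = 1"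
    using mtrace_Tmap[OF tol] unfolding density_matrices_def by simp
  moreover have "\<beta> < inner w (Tmap R d)" using sep sd(2) by blast
  ultimately show ?thesis
    using sd by (auto simp: linear_cmul[OF linear_Tmap] inner_diff_left inner_mat1)
qed

text \<open>Strictly separate \<open>\<rho>\<close> from the compact convex set \<open>T(density matrices)\<close> by
  \<open>\<langle>w, -\<rangle> > \<beta>\<close>.  Then \<open>\<langle>w - \<beta> 1, -\<rangle>\<close> is nonnegative on \<open>T(psd)\<close>, so the hermitian part of
  \<open>T(w - \<beta> 1)\<close> is a positive semidefinite element of \<open>A(R)\<close> on which \<open>\<rho>\<close> is negative.\<close>
lemma Rpos_if_dual_nonneg:
  assumes tol: "tolerance R" and "\<rho> \<in> opsys R" "hermitian \<rho>" "mtrace \<rho> = 1"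
    and dual: "\<forall>h\<in>opsys R. psd h \<longrightarrow> 0 \<le> Re (hs_inner \<rho> h)"
  shows "Rpos R \<rho>"
proof (rule ccontr)
  assume "\<not> Rpos R \<rho>"
  then have notin: "\<rho> \<notin> Tmap R ` density_matrices"
    unfolding Rpos_def density_matrices_def by blast
  have "compact (Tmap R ` density_matrices)"
    using compact_density_matrices linear_Tmap
    by (intro compact_continuous_image linear_continuous_on) (simp_all add: linear_conv_bounded_linear)
  moreover have "convex (Tmap R ` density_matrices)"
    by (rule convex_linear_image[OF linear_Tmap convex_density_matrices])
  ultimately obtain w \<beta> where w_\<rho>: "inner w \<rho> < \<beta>" and w_T: "\<forall>x\<in>Tmap R ` density_matrices. \<beta> < inner w x"
    using separating_hyperplane_closed_point[OF _ compact_imp_closed notin] by blast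
  define w' where "w' = w - \<beta> *\<^sub>R mat 1"
  define h where "h = hermitian_part (Tmap R w')"
  have "psd h"
    unfolding h_def w'_def using inner_Tmap_psd_nonneg_if_separating[OF tol w_T psd_outer]
    by (intro psd_hermitian_part) (metis inner_Tmap inner_commute)
  have "Re (hs_inner \<rho> h) = inner \<rho> (Tmap R w')"
    unfolding h_def inner_eq_Re_hs_inner[symmetric] using \<open>hermitian \<rho>\<close> by (rule inner_hermitian_part)
  also have "\<dots> = inner w' \<rho>"
    using inner_Tmap[of \<rho> R w'] Tmap_eq_self[OF \<open>\<rho> \<in> opsys R\<close>] by (simp add: inner_commute)
  also have "\<dots> < 0"
    using w_\<rho> \<open>mtrace \<rho> = 1\<close> by (simp add: w'_def inner_diff_left inner_mat1)
  finally show False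
    using dual \<open>psd h\<close> hermitian_part_Tmap_in_opsys[OF tol] unfolding h_def by fastforce
qed

section \<open>States of \<open>A(R)\<close>\<close>

definition density_of_state :: "('n \<times> 'n) set \<Rightarrow> (complex^'n^'n \<Rightarrow> complex) \<Rightarrow> complex^'n^'n" where
  "density_of_state R \<phi> = (\<chi> i j. if (i, j) \<in> R then cnj (\<phi> (mat_unit i j)) else 0)"

lemma hs_inner_mat_unit: "hs_inner \<rho> (mat_unit i j) = cnj (\<rho> $ i $ j)"
proof -
  have "cnj (\<rho> $ k $ l) * mat_unit i j $ k $ l = (if l = j then (if k = i then cnj (\<rho> $ i $ j) else 0) else 0)"
    for k l by (simp add: mat_unit_def)
  then show ?thesis unfolding hs_inner_def by simp
qed

lemma state_of_eq_hs_inner: "a \<in> opsys R \<Longrightarrow> state_of R \<rho> a = hs_inner \<rho> a"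
  unfolding state_of_def by (simp add: mtrace_adjoint_mult)

lemma state_of_in_states:
  assumes tol: "tolerance R" and "\<rho> \<in> density_set R"
  shows "state_of R \<rho> \<in> states R"
proof -
  obtain b where b: "psd b" "\<rho> = Tmap R b" and "mtrace \<rho> = 1"
    using \<open>\<rho> \<in> density_set R\<close> unfolding density_set_def Rpos_def by blast
  show ?thesis unfolding states_def
  proof (intro CollectI conjI ballI allI impI)
    fix a assume "a \<in> opsys R" "psd a"
    then have "state_of R \<rho> a = hs_inner b a"
      using b(2) by (simp add: state_of_eq_hs_inner hs_inner_Tmap_left)
    then show "state_of R \<rho> a \<in> \<real>" "0 \<le> Re (state_of R \<rho> a)"
      using hs_inner_psd_nonneg[OF \<open>psd a\<close> b(1)] by auto
  next
    show "state_of R \<rho> (mat 1) = 1"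
      using \<open>mtrace \<rho> = 1\<close> by (simp add: state_of_eq_hs_inner mat1_in_opsys[OF tol] hs_inner_mat1_right)
  qed (simp_all add: state_of_eq_hs_inner opsys_add opsys_scale hs_inner_add_right hs_inner_scale_right,
       simp add: state_of_def)
qed

lemma density_of_state_state_of:
  assumes "\<rho> \<in> opsys R"
  shows "density_of_state R (state_of R \<rho>) = \<rho>"
  using assms unfolding in_opsys_iff vec_eq_iff density_of_state_def
  by (simp add: state_of_eq_hs_inner mat_unit_in_opsys hs_inner_mat_unit)

lemma statesD:
  assumes "\<phi> \<in> states R"
  shows "\<And>a b. a \<in> opsys R \<Longrightarrow> b \<in> opsys R \<Longrightarrow> \<phi> (a + b) = \<phi> a + \<phi> b"
    and "\<And>c a. a \<in> opsys R \<Longrightarrow> \<phi> (\<chi> i j. c * a $ i $ j) = c * \<phi> a"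
    and "\<And>a. a \<in> opsys R \<Longrightarrow> psd a \<Longrightarrow> \<phi> a \<in> \<real> \<and> 0 \<le> Re (\<phi> a)"
    and "\<phi> (mat 1) = 1"
    and "\<And>a. a \<notin> opsys R \<Longrightarrow> \<phi> a = 0"
  using assms unfolding states_def by blast+

lemma state_zero:
  fixes \<phi> :: "complex^'n^'n \<Rightarrow> complex"
  assumes "\<phi> \<in> states R"
  shows "\<phi> 0 = 0"
proof -
  have "\<phi> (\<chi> i j. 0 * (0::complex^'n^'n) $ i $ j) = 0 * \<phi> 0"
    by (rule statesD(2)[OF assms]) (simp add: in_opsys_iff)
  moreover have "(\<chi> i j. 0 * (0::complex^'n^'n) $ i $ j) = 0" by (simp add: vec_eq_iff)
  ultimately show ?thesis by simp
qed

lemma state_sum: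
  assumes "\<phi> \<in> states R" "\<And>p. p \<in> F \<Longrightarrow> f p \<in> opsys R"
  shows "\<phi> (sum f F) = (\<Sum>p\<in>F. \<phi> (f p))"
  using assms(2)
proof (induction F rule: infinite_finite_induct)
  case (insert x F)
  then show ?case by (simp add: statesD(1)[OF assms(1)] opsys_sum)
qed (simp_all add: state_zero[OF assms(1)])

lemma state_eq_hs_inner_density_of_state:
  assumes \<phi>: "\<phi> \<in> states R" and "a \<in> opsys R"
  shows "\<phi> a = hs_inner (density_of_state R \<phi>) a"
proof -
  define t where "t p = (\<chi> k l. a $ fst p $ snd p * mat_unit (fst p) (snd p) $ k $ l)" for p
  have t_in: "t p \<in> opsys R" for p
    using \<open>a \<in> opsys R\<close> unfolding in_opsys_iff t_def mat_unit_def by auto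
  have "t p $ k $ l = (if p = (k, l) then a $ k $ l else 0)" for p k l
    unfolding t_def mat_unit_def by auto
  then have a_sum: "a = sum t UNIV" by (simp add: vec_eq_iff)
  have t_val: "\<phi> (t p) = cnj (density_of_state R \<phi> $ fst p $ snd p) * a $ fst p $ snd p" for p
  proof -
    obtain k l where p: "p = (k, l)" by (cases p)
    show ?thesis
    proof (cases "(k, l) \<in> R")
      case True
      then show ?thesis
        unfolding p t_def using statesD(2)[OF \<phi> mat_unit_in_opsys[OF True]]
        by (simp add: density_of_state_def mult.commute)
    next
      case False
      then have "a $ k $ l = 0" using \<open>a \<in> opsys R\<close> unfolding in_opsys_iff by blast
      moreover have "t p = 0" using calculation unfolding p t_def by (simp add: vec_eq_iff)
      ultimately show ?thesis using state_zero[OF \<phi>] p by simp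
    qed
  qed
  have "\<phi> a = (\<Sum>p\<in>UNIV. cnj (density_of_state R \<phi> $ fst p $ snd p) * a $ fst p $ snd p)"
    using state_sum[OF \<phi> t_in] a_sum t_val by simp
  also have "\<dots> = hs_inner (density_of_state R \<phi>) a"
    unfolding hs_inner_def UNIV_Times_UNIV[symmetric] sum.cartesian_product by (simp add: case_prod_beta)
  finally show ?thesis .
qed

text \<open>Hermiticity of the representing matrix comes from positivity of \<open>\<phi>\<close> on the rank-one
  matrices \<open>v v\<^sup>*\<close> with \<open>v\<close> supported on \<open>{i, j}\<close>, which lie in \<open>A(R)\<close> for \<open>(i, j) \<in> R\<close>.\<close>
lemma hermitian_density_of_state:
  assumes tol: "tolerance R" and \<phi>: "\<phi> \<in> states R"
  shows "hermitian (density_of_state R \<phi>)"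
  unfolding hermitian_def
proof (intro allI)
  fix i j
  define g where "g = density_of_state R \<phi>"
  show "density_of_state R \<phi> $ j $ i = cnj (density_of_state R \<phi> $ i $ j)"
  proof (cases "(i, j) \<in> R")
    case False
    then have "(j, i) \<notin> R" using tolerance_sym[OF tol] by blast
    then show ?thesis using False unfolding density_of_state_def by simp
  next
    case True
    have real: "qform (adjoint_mat g) v v \<in> \<real>" if "\<And>k. v $ k \<noteq> 0 \<Longrightarrow> k = i \<or> k = j" for v
    proof -
      have "outer v \<in> opsys R" by (rule outer_in_opsys[OF tol True that])
      then have "\<phi> (outer v) = qform (adjoint_mat g) v v"
        using state_eq_hs_inner_density_of_state[OF \<phi>] by (simp add: g_def hs_inner_outer)
      then show ?thesis using statesD(3)[OF \<phi> \<open>outer v \<in> opsys R\<close> psd_outer] by simp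
    qed
    have "adjoint_mat g $ j $ i = cnj (adjoint_mat g $ i $ j)"
      by (rule hermitian_entry_if_qform_real; rule real; auto simp: axis_def split: if_splits)
    then show ?thesis unfolding g_def adjoint_mat_def by simp
  qed
qed

lemma density_of_state_in_density_set:
  assumes tol: "tolerance R" and \<phi>: "\<phi> \<in> states R"
  shows "density_of_state R \<phi> \<in> density_set R"
proof -
  define g where "g = density_of_state R \<phi>"
  have "g \<in> opsys R" unfolding g_def density_of_state_def in_opsys_iff by simp
  have "cnj (mtrace g) = 1"
    using state_eq_hs_inner_density_of_state[OF \<phi> mat1_in_opsys[OF tol]] statesD(4)[OF \<phi>]
    unfolding g_def by (simp add: hs_inner_mat1_right)
  then have "mtrace g = 1" by (metis complex_cnj_cnj complex_cnj_one)
  moreover have "Rpos R g"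
  proof (rule Rpos_if_dual_nonneg[OF tol \<open>g \<in> opsys R\<close> _ \<open>mtrace g = 1\<close>])
    show "hermitian g" unfolding g_def by (rule hermitian_density_of_state[OF tol \<phi>])
    show "\<forall>h\<in>opsys R. psd h \<longrightarrow> 0 \<le> Re (hs_inner g h)"
      using state_eq_hs_inner_density_of_state[OF \<phi>] statesD(3)[OF \<phi>] unfolding g_def by simp
  qed
  ultimately show ?thesis using \<open>g \<in> opsys R\<close> unfolding density_set_def g_def by simp
qed

lemma state_of_density_of_state:
  assumes "\<phi> \<in> states R"
  shows "state_of R (density_of_state R \<phi>) = \<phi>"
proof
  fix a
  show "state_of R (density_of_state R \<phi>) a = \<phi> a"
    by (cases "a \<in> opsys R")
      (simp_all add: state_of_eq_hs_inner state_eq_hs_inner_density_of_state[OF assms] statesD(5)[OF assms],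
       simp add: state_of_def)
qed

lemma continuous_on_state_of: "continuous_on S (state_of R)"
proof (rule continuous_on_coordinatewise_then_product)
  fix a
  show "continuous_on S (\<lambda>\<rho>. state_of R \<rho> a)"
    unfolding state_of_def mtrace_adjoint_mult hs_inner_def
    by (cases "a \<in> opsys R") (simp_all, intro continuous_intros)
qed

lemma continuous_on_density_of_state:
  fixes R :: "('n::finite \<times> 'n) set"
  shows "continuous_on S (density_of_state R)"
  unfolding density_of_state_def
proof (intro continuous_on_vec_lambda)
  fix i j
  have "continuous_on S (\<lambda>\<phi>::complex^'n^'n \<Rightarrow> complex. \<phi> (mat_unit i j))"
    by (rule continuous_on_subset[OF continuous_on_product_coordinates]) simp
  then show "continuous_on S (\<lambda>\<phi>. if (i, j) \<in> R then cnj (\<phi> (mat_unit i j)) else 0)"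
    by (cases "(i, j) \<in> R") (simp_all add: continuous_on_cnj)
qed

theorem corollary4p8:
  fixes R :: "('n::finite \<times> 'n) set"
  assumes "tolerance R"
  shows "bij_betw (state_of R) (density_set R) (states R) \<and>
         homeomorphic_map (top_of_set (density_set R)) (top_of_set (states R)) (state_of R)"
proof
  have inverse_left: "\<forall>\<rho>\<in>density_set R. density_of_state R (state_of R \<rho>) = \<rho>"
    using density_of_state_state_of unfolding density_set_def by blast
  have inverse_right: "\<forall>\<phi>\<in>states R. state_of R (density_of_state R \<phi>) = \<phi>"
    using state_of_density_of_state by blast
  have maps_to: "state_of R \<in> density_set R \<rightarrow> states R"
    using state_of_in_states[OF assms] by blast
  have maps_from: "density_of_state R \<in> states R \<rightarrow> density_set R"
    using density_of_state_in_density_set[OF assms] by blast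
  show "bij_betw (state_of R) (density_set R) (states R)"
    using inverse_left inverse_right maps_to maps_from by (intro bij_betw_byWitness) auto
  show "homeomorphic_map (top_of_set (density_set R)) (top_of_set (states R)) (state_of R)"
    using inverse_left inverse_right maps_to maps_from
      continuous_on_state_of[of "density_set R" R] continuous_on_density_of_state[of "states R" R]
    by (intro homeomorphic_maps_imp_map[where g = "density_of_state R"]) (simp add: homeomorphic_maps_def)
qed

end
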